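(* For each integer $n\ge 1$ there exists a 6-stack of rank $n$, and any two 6-stacks of rank $n$ are isomorphic.
   Context: All posets are finite. For a poset $P$ and $p\in P$, the rank $r(p)$ of $p$ is the largest $m$ such that there is a chain $p_0<p_1<\dots<p_m=p$ in $P$. The poset $P$ is ranked of rank $r(P)$ if every maximal chain of $P$ has exactly $r(P)+1$ elements. For integers $0\le i\le j$, $P(i,j)=\{p\in P: i\le r(p)\le j\}$ and $P(i)=P(i,i)$, each with the induced order. The 6-crown $C_6$ is the poset on $\{x_0,x_1,x_2,y_0,y_1,y_2\}$ whose only strict comparabilities are $x_0<y_0>x_1<y_1>x_2<y_2>x_0$. A 6-stack is a ranked poset $P$ of rank $n\ge 1$ such that for each $0\le i<n$, $P(i,i+1)$ is isomorphic to $C_6$. *)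

theory Defs
  imports Main
begin

definition finite_poset :: "'a set \<Rightarrow> ('a \<Rightarrow> 'a \<Rightarrow> bool) \<Rightarrow> bool" where
  "finite_poset P le \<longleftrightarrow> finite P
     \<and> (\<forall>x\<in>P. le x x)
     \<and> (\<forall>x\<in>P. \<forall>y\<in>P. le x y \<and> le y x \<longrightarrow> x = y)
     \<and> (\<forall>x\<in>P. \<forall>y\<in>P. \<forall>z\<in>P. le x y \<and> le y z \<longrightarrow> le x z)"

definition strict :: "('a \<Rightarrow> 'a \<Rightarrow> bool) \<Rightarrow> 'a \<Rightarrow> 'a \<Rightarrow> bool" where
  "strict le x y \<longleftrightarrow> le x y \<and> x \<noteq> y"

definition elem_rank :: "'a set \<Rightarrow> ('a \<Rightarrow> 'a \<Rightarrow> bool) \<Rightarrow> 'a \<Rightarrow> nat" where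
  "elem_rank P le p = Max {m. \<exists>xs. length xs = Suc m \<and> set xs \<subseteq> P
        \<and> sorted_wrt (strict le) xs \<and> last xs = p}"

definition is_chain :: "'a set \<Rightarrow> ('a \<Rightarrow> 'a \<Rightarrow> bool) \<Rightarrow> 'a set \<Rightarrow> bool" where
  "is_chain P le C \<longleftrightarrow> C \<subseteq> P \<and> (\<forall>x\<in>C. \<forall>y\<in>C. le x y \<or> le y x)"

definition maximal_chain :: "'a set \<Rightarrow> ('a \<Rightarrow> 'a \<Rightarrow> bool) \<Rightarrow> 'a set \<Rightarrow> bool" where
  "maximal_chain P le C \<longleftrightarrow> is_chain P le C \<and> (\<forall>D. is_chain P le D \<and> C \<subseteq> D \<longrightarrow> D = C)"

definition ranked_of_rank :: "'a set \<Rightarrow> ('a \<Rightarrow> 'a \<Rightarrow> bool) \<Rightarrow> nat \<Rightarrow> bool" where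
  "ranked_of_rank P le n \<longleftrightarrow> (\<forall>C. maximal_chain P le C \<longrightarrow> card C = Suc n)"

text \<open>P(i,j), carrying the induced order (the restriction of le)\<close>
definition rank_slice :: "'a set \<Rightarrow> ('a \<Rightarrow> 'a \<Rightarrow> bool) \<Rightarrow> nat \<Rightarrow> nat \<Rightarrow> 'a set" where
  "rank_slice P le i j = {p\<in>P. i \<le> elem_rank P le p \<and> elem_rank P le p \<le> j}"

definition poset_iso :: "'a set \<Rightarrow> ('a \<Rightarrow> 'a \<Rightarrow> bool) \<Rightarrow> 'b set \<Rightarrow> ('b \<Rightarrow> 'b \<Rightarrow> bool) \<Rightarrow> bool" where
  "poset_iso A leA B leB \<longleftrightarrow> (\<exists>f. bij_betw f A B \<and> (\<forall>x\<in>A. \<forall>y\<in>A. leA x y \<longleftrightarrow> leB (f x) (f y)))"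

text \<open>The 6-crown on {0..5}: x_i = i, y_i = 3+i; x0<y0>x1<y1>x2<y2>x0.\<close>
definition crown6 :: "nat set" where
  "crown6 = {0..5}"

definition crown6_le :: "nat \<Rightarrow> nat \<Rightarrow> bool" where
  "crown6_le a b \<longleftrightarrow> a = b \<or> (a, b) \<in> {(0,3),(1,3),(1,4),(2,4),(2,5),(0,5)}"

definition six_stack :: "'a set \<Rightarrow> ('a \<Rightarrow> 'a \<Rightarrow> bool) \<Rightarrow> nat \<Rightarrow> bool" where
  "six_stack P le n \<longleftrightarrow> finite_poset P le \<and> n \<ge> 1 \<and> ranked_of_rank P le n
     \<and> (\<forall>i<n. poset_iso (rank_slice P le i (Suc i)) le crown6 crown6_le)"

end

theory Submission
  imports Defs
begin

(* In a 6-stack every rank level has three elements, each element of rank i + 1 lies above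
   exactly two elements of rank i, and distinct elements of rank i + 1 lie above distinct pairs.
   Two distinct 2-subsets of a 3-set cover it, so elements whose ranks differ by at least two are
   always comparable.  Hence the order is determined by the bijections between level i + 1 and the
   2-subsets of level i, and an isomorphism of two 6-stacks is built level by level, transporting
   a bijection of level i to level i + 1 through these 2-subsets.  For existence, take 3 k + r
   (r < 3) as the r-th element of rank k and copy the crown between consecutive levels. *)

lemma sorted_wrt_strict_imp_distinct: "sorted_wrt (strict le) xs \<Longrightarrow> distinct xs"
  by (induction xs) (auto simp: strict_def)

lemma strict_chain_length_le_card:
  assumes "finite_poset P le" "set xs \<subseteq> P" "sorted_wrt (strict le) xs"
  shows "length xs \<le> card P"
proof -
  have "length xs = card (set xs)"
    using sorted_wrt_strict_imp_distinct[OF assms(3)] by (simp add: distinct_card)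
  also have "\<dots> \<le> card P"
    using assms(1,2) by (simp add: finite_poset_def card_mono)
  finally show ?thesis .
qed

lemma finite_rank_candidates:
  assumes "finite_poset P le"
  shows "finite {m. \<exists>xs. length xs = Suc m \<and> set xs \<subseteq> P
           \<and> sorted_wrt (strict le) xs \<and> last xs = p}"
  by (rule finite_subset[of _ "{..card P}"])
    (use strict_chain_length_le_card[OF assms] in fastforce)+

lemma elem_rank_chain_exists:
  assumes "finite_poset P le" and "p \<in> P"
  obtains xs where "length xs = Suc (elem_rank P le p)" "set xs \<subseteq> P"
    "sorted_wrt (strict le) xs" "last xs = p"
proof -
  let ?S = "{m. \<exists>xs. length xs = Suc m \<and> set xs \<subseteq> P
              \<and> sorted_wrt (strict le) xs \<and> last xs = p}"
  have "0 \<in> ?S" using assms(2) by (intro CollectI exI[of _ "[p]"]) auto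
  then have "Max ?S \<in> ?S" using finite_rank_candidates[OF assms(1)] by (intro Max_in) auto
  then show ?thesis using that unfolding elem_rank_def by blast
qed

lemma chain_length_le_elem_rank:
  assumes "finite_poset P le" "length xs = Suc m" "set xs \<subseteq> P"
    "sorted_wrt (strict le) xs" "last xs = p"
  shows "m \<le> elem_rank P le p"
  unfolding elem_rank_def using assms finite_rank_candidates[OF assms(1)] by (intro Max_ge) auto

lemma elem_rank_strict_mono:
  assumes fp: "finite_poset P le" and "a \<in> P" "b \<in> P" "le a b" "a \<noteq> b"
  shows "elem_rank P le a < elem_rank P le b"
proof -
  obtain xs where xs: "length xs = Suc (elem_rank P le a)" "set xs \<subseteq> P"
      "sorted_wrt (strict le) xs" "last xs = a"
    using elem_rank_chain_exists[OF fp \<open>a \<in> P\<close>] .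
  then obtain ys where xs_eq: "xs = ys @ [a]"
    by (cases xs rule: rev_cases) auto
  have "le x a" if "x \<in> set xs" for x
    using that xs(3) fp \<open>a \<in> P\<close> by (auto simp: xs_eq sorted_wrt_append strict_def finite_poset_def)
  then have "strict le x b" if "x \<in> set xs" for x
    using assms that xs(2) unfolding finite_poset_def strict_def by blast
  then have "Suc (elem_rank P le a) \<le> elem_rank P le b"
    using xs assms by (intro chain_length_le_elem_rank[OF fp, of "xs @ [b]"])
      (auto simp: sorted_wrt_append)
  then show ?thesis by simp
qed

lemma elem_rank_SucE:
  assumes fp: "finite_poset P le" and "p \<in> P" and rank_p: "elem_rank P le p = Suc m"
  obtains q where "q \<in> P" "le q p" "q \<noteq> p" "elem_rank P le q = m"
proof -
  obtain xs where xs: "length xs = Suc (Suc m)" "set xs \<subseteq> P"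
      "sorted_wrt (strict le) xs" "last xs = p"
    using elem_rank_chain_exists[OF fp \<open>p \<in> P\<close>] rank_p by metis
  define q where "q = xs ! m"
  have "q \<in> P" using xs(1,2) nth_mem[of m xs] by (simp add: q_def subset_iff)
  have "xs ! Suc m = p" using xs(1,4) last_conv_nth[of xs] by force
  then have "strict le q p"
    using xs(1,3) sorted_wrt_nth_less[of "strict le" xs m "Suc m"] by (simp add: q_def)
  have "m \<le> elem_rank P le q"
  proof (rule chain_length_le_elem_rank[OF fp, of "take (Suc m) xs"])
    show "set (take (Suc m) xs) \<subseteq> P" using xs(2) set_take_subset by fast
    have "take (Suc m) xs \<noteq> []" using xs(1) by (cases xs) simp_all
    then show "last (take (Suc m) xs) = q"
      using xs(1) by (simp add: last_conv_nth q_def)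
  qed (use xs in \<open>simp_all add: sorted_wrt_take\<close>)
  moreover have "elem_rank P le q < Suc m"
    using elem_rank_strict_mono[OF fp \<open>q \<in> P\<close> \<open>p \<in> P\<close>] \<open>strict le q p\<close> rank_p
    by (simp add: strict_def)
  ultimately show ?thesis
    using that \<open>q \<in> P\<close> \<open>strict le q p\<close> by (simp add: strict_def)
qed

lemma chain_extends_to_maximal_chain:
  assumes "finite P" and "is_chain P le C"
  obtains D where "maximal_chain P le D" "C \<subseteq> D"
proof -
  let ?A = "{D. is_chain P le D \<and> C \<subseteq> D}"
  have "?A \<subseteq> Pow P" by (auto simp: is_chain_def)
  then have "finite ?A" using assms(1) finite_subset by blast
  then obtain D where "D \<in> ?A" and max: "\<forall>E\<in>?A. D \<subseteq> E \<longrightarrow> D = E"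
    using finite_has_maximal2[of ?A C] assms(2) by blast
  then have "maximal_chain P le D"
    unfolding maximal_chain_def by blast
  with \<open>D \<in> ?A\<close> show ?thesis using that by blast
qed

lemma strict_chain_is_chain:
  assumes "finite_poset P le" "set xs \<subseteq> P" "sorted_wrt (strict le) xs"
  shows "is_chain P le (set xs)"
  unfolding is_chain_def
proof (intro conjI ballI)
  show "set xs \<subseteq> P" by fact
  fix x y assume "x \<in> set xs" "y \<in> set xs"
  then obtain i j where ij: "i < length xs" "j < length xs" "x = xs ! i" "y = xs ! j"
    by (auto simp: in_set_conv_nth)
  have "le (xs ! i) (xs ! i)"
    using assms(1,2) nth_mem[OF ij(1)] by (auto simp: finite_poset_def)
  moreover have "le (xs ! i) (xs ! j)" if "i < j"
    using sorted_wrt_nth_less[OF assms(3) that ij(2)] by (simp add: strict_def)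
  moreover have "le (xs ! j) (xs ! i)" if "j < i"
    using sorted_wrt_nth_less[OF assms(3) that ij(1)] by (simp add: strict_def)
  ultimately show "le x y \<or> le y x"
    using ij(3,4) by (metis linorder_cases)
qed

lemma elem_rank_le_rank:
  assumes fp: "finite_poset P le" and "ranked_of_rank P le n" and "p \<in> P"
  shows "elem_rank P le p \<le> n"
proof -
  obtain xs where xs: "length xs = Suc (elem_rank P le p)" "set xs \<subseteq> P"
      "sorted_wrt (strict le) xs"
    using elem_rank_chain_exists[OF fp \<open>p \<in> P\<close>] by metis
  have "finite P" using fp by (simp add: finite_poset_def)
  then obtain D where D: "maximal_chain P le D" "set xs \<subseteq> D"
    using chain_extends_to_maximal_chain strict_chain_is_chain[OF fp xs(2,3)] by blast
  have "finite D"
    using D(1) \<open>finite P\<close> by (auto simp: maximal_chain_def is_chain_def intro: finite_subset)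
  then have "card (set xs) \<le> card D" using D(2) by (rule card_mono)
  moreover have "card (set xs) = Suc (elem_rank P le p)"
    using xs(1) sorted_wrt_strict_imp_distinct[OF xs(3)] by (simp add: distinct_card)
  ultimately show ?thesis
    using \<open>ranked_of_rank P le n\<close> D(1) by (simp add: ranked_of_rank_def)
qed

lemma elem_rank_eqI:
  assumes fp: "finite_poset P le" and "p \<in> P"
    and mono: "\<And>x y. x \<in> P \<Longrightarrow> y \<in> P \<Longrightarrow> le x y \<Longrightarrow> x \<noteq> y \<Longrightarrow> h x < h y"
    and step: "\<And>y m. y \<in> P \<Longrightarrow> h y = Suc m \<Longrightarrow> \<exists>x\<in>P. le x y \<and> x \<noteq> y \<and> h x = m"
  shows "elem_rank P le p = h p"
proof (rule antisym)
  have "elem_rank P le y \<le> h y" if "y \<in> P" "elem_rank P le y = k" for y k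
    using that
  proof (induction k arbitrary: y)
    case (Suc k)
    then obtain x where "x \<in> P" "le x y" "x \<noteq> y" "elem_rank P le x = k"
      using elem_rank_SucE[OF fp] by metis
    then show ?case using Suc mono[of x y] by fastforce
  qed simp
  then show "elem_rank P le p \<le> h p" using \<open>p \<in> P\<close> by blast
  have "h y \<le> elem_rank P le y" if "y \<in> P" "h y = k" for y k
    using that
  proof (induction k arbitrary: y)
    case (Suc k)
    then obtain x where "x \<in> P" "le x y" "x \<noteq> y" "h x = k"
      using step by metis
    then show ?case using Suc elem_rank_strict_mono[OF fp, of x y] by fastforce
  qed simp
  then show "h p \<le> elem_rank P le p" using \<open>p \<in> P\<close> by blast
qed

lemma le_iff_eq_if_elem_rank_le:
  assumes "finite_poset P le" "x \<in> P" "y \<in> P" "elem_rank P le y \<le> elem_rank P le x"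
  shows "le x y \<longleftrightarrow> x = y"
  using elem_rank_strict_mono[OF assms(1-3)] assms unfolding finite_poset_def by fastforce

lemma two_subsets_of_three_cover:
  assumes "card L = 3" "A \<subseteq> L" "B \<subseteq> L" "card A = 2" "card B = 2" "A \<noteq> B"
  shows "A \<union> B = L"
proof -
  have "finite L" using assms(1) by (intro card_ge_0_finite) simp
  have "finite A" using finite_subset[OF assms(2) \<open>finite L\<close>] .
  have "\<not> B \<subseteq> A"
  proof
    assume "B \<subseteq> A"
    then have "B = A" using card_subset_eq[OF \<open>finite A\<close>] assms(4,5) by simp
    then show False using assms(6) by simp
  qed
  then have "A \<subset> A \<union> B" by blast
  then have "card A < card (A \<union> B)"
    using finite_subset[OF _ \<open>finite L\<close>] assms(2,3) by (intro psubset_card_mono) simp_all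
  moreover have "card (A \<union> B) \<le> card L"
    using assms(2,3) \<open>finite L\<close> by (intro card_mono) simp_all
  ultimately have "card (A \<union> B) = card L" using assms(1,4) by simp
  then show ?thesis
    using card_subset_eq[OF \<open>finite L\<close>] assms(2,3) by simp
qed

definition minimal_elements :: "'a set \<Rightarrow> ('a \<Rightarrow> 'a \<Rightarrow> bool) \<Rightarrow> 'a set" where
  "minimal_elements A le = {x\<in>A. \<forall>y\<in>A. le y x \<longrightarrow> y = x}"

lemma order_iso_image_minimal_elements:
  assumes "bij_betw f A B" and "\<forall>x\<in>A. \<forall>y\<in>A. leA x y \<longleftrightarrow> leB (f x) (f y)"
  shows "f ` minimal_elements A leA = minimal_elements B leB"
  using assms unfolding minimal_elements_def bij_betw_def inj_on_def by auto

lemma bij_betw_image_card_subsets: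
  assumes "bij_betw f A B"
  shows "bij_betw (image f) {S. S \<subseteq> A \<and> card S = k} {T. T \<subseteq> B \<and> card T = k}"
proof (rule bij_betw_subset[OF bij_betw_Pow[OF assms]])
  have card_eq: "card (f ` S) = card S" if "S \<subseteq> A" for S
    by (rule card_image[OF inj_on_subset[OF bij_betw_imp_inj_on[OF assms] that]])
  have "image f ` Pow A = Pow B"
    using bij_betw_imp_surj_on[OF bij_betw_Pow[OF assms]] .
  then show "image f ` {S. S \<subseteq> A \<and> card S = k} = {T. T \<subseteq> B \<and> card T = k}"
  proof (intro equalityI subsetI)
    fix T assume "T \<in> {T. T \<subseteq> B \<and> card T = k}"
    then have "T \<in> image f ` Pow A" using \<open>image f ` Pow A = Pow B\<close> by simp
    then obtain S where "S \<subseteq> A" "T = f ` S" by blast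
    moreover have "card T = k" using \<open>T \<in> {T. T \<subseteq> B \<and> card T = k}\<close> by simp
    ultimately show "T \<in> image f ` {S. S \<subseteq> A \<and> card S = k}"
      using card_eq by auto
  next
    fix T assume "T \<in> image f ` {S. S \<subseteq> A \<and> card S = k}"
    then obtain S where "S \<subseteq> A" "card S = k" "T = f ` S" by blast
    moreover have "f ` S \<subseteq> B" using \<open>S \<subseteq> A\<close> bij_betw_imp_surj_on[OF assms] by blast
    ultimately show "T \<in> {T. T \<subseteq> B \<and> card T = k}" using card_eq by simp
  qed
qed blast

lemma crown6_eq: "crown6 = {0, 1, 2, 3, 4, 5}"
  by (auto simp: crown6_def)

lemma crown6_minimal_elements: "minimal_elements crown6 crown6_le = {0, 1, 2}"
  unfolding minimal_elements_def crown6_eq crown6_le_def by auto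

definition crown6_below :: "nat \<Rightarrow> nat set" where
  "crown6_below w = {z\<in>{0, 1, 2}. crown6_le z w}"

lemma crown6_below_bij:
  "bij_betw crown6_below {3, 4, 5} {S. S \<subseteq> {0, 1, 2} \<and> card S = 2}"
proof -
  have below_values: "crown6_below 3 = {0, 1}" "crown6_below 4 = {1, 2}" "crown6_below 5 = {0, 2}"
    by (auto simp: crown6_below_def crown6_le_def)
  have "inj_on crown6_below {3, 4, 5}"
    unfolding inj_on_def by (simp add: below_values doubleton_eq_iff)
  moreover have "crown6_below ` {3, 4, 5} \<subseteq> {S. S \<subseteq> {0, 1, 2} \<and> card S = 2}"
    by (simp add: below_values)
  moreover have "card {S. S \<subseteq> {0, 1, 2 :: nat} \<and> card S = 2} = card (crown6_below ` {3, 4, 5})"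
    using n_subsets[of "{0, 1, 2 :: nat}" 2] card_image[OF \<open>inj_on crown6_below {3, 4, 5}\<close>]
    by (simp add: choose_two)
  ultimately show ?thesis
    unfolding bij_betw_def by (simp add: card_subset_eq)
qed

definition rank_level :: "'a set \<Rightarrow> ('a \<Rightarrow> 'a \<Rightarrow> bool) \<Rightarrow> nat \<Rightarrow> 'a set" where
  "rank_level P le i = {p\<in>P. elem_rank P le p = i}"

definition level_below :: "'a set \<Rightarrow> ('a \<Rightarrow> 'a \<Rightarrow> bool) \<Rightarrow> nat \<Rightarrow> 'a \<Rightarrow> 'a set" where
  "level_below P le i y = {x\<in>rank_level P le i. le x y}"

lemma rank_slice_Suc: "rank_slice P le i (Suc i) = rank_level P le i \<union> rank_level P le (Suc i)"
  by (auto simp: rank_slice_def rank_level_def)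

lemma minimal_elements_rank_slice:
  assumes fp: "finite_poset P le"
  shows "minimal_elements (rank_slice P le i (Suc i)) le = rank_level P le i"
proof (intro equalityI subsetI)
  fix x assume x: "x \<in> minimal_elements (rank_slice P le i (Suc i)) le"
  show "x \<in> rank_level P le i"
  proof (rule ccontr)
    assume "x \<notin> rank_level P le i"
    then have "x \<in> P" "elem_rank P le x = Suc i"
      using x by (auto simp: minimal_elements_def rank_slice_Suc rank_level_def)
    then obtain y where "y \<in> P" "le y x" "y \<noteq> x" "elem_rank P le y = i"
      using elem_rank_SucE[OF fp] by metis
    then show False
      using x by (auto simp: minimal_elements_def rank_slice_Suc rank_level_def)
  qed
next
  fix x assume x: "x \<in> rank_level P le i"
  have "y = x" if "y \<in> rank_slice P le i (Suc i)" "le y x" for y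
    using elem_rank_strict_mono[OF fp, of y x] that x
    by (fastforce simp: rank_slice_def rank_level_def)
  then show "x \<in> minimal_elements (rank_slice P le i (Suc i)) le"
    using x by (auto simp: minimal_elements_def rank_slice_Suc)
qed

lemma crown_slice_isoE:
  assumes fp: "finite_poset P le"
    and iso: "poset_iso (rank_slice P le i (Suc i)) le crown6 crown6_le"
  obtains f where "bij_betw f (rank_level P le i) {0, 1, 2}"
    "bij_betw f (rank_level P le (Suc i)) {3, 4, 5}"
    "\<forall>x\<in>rank_level P le i \<union> rank_level P le (Suc i).
       \<forall>y\<in>rank_level P le i \<union> rank_level P le (Suc i). le x y \<longleftrightarrow> crown6_le (f x) (f y)"
proof -
  let ?L = "rank_level P le i" and ?U = "rank_level P le (Suc i)"
  obtain f where f: "bij_betw f (?L \<union> ?U) crown6"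
    and f_le: "\<forall>x\<in>?L \<union> ?U. \<forall>y\<in>?L \<union> ?U. le x y \<longleftrightarrow> crown6_le (f x) (f y)"
    using iso unfolding poset_iso_def rank_slice_Suc by blast
  have "f ` ?L = {0, 1, 2}"
    using order_iso_image_minimal_elements[OF f f_le] crown6_minimal_elements
    by (simp add: minimal_elements_rank_slice[OF fp, unfolded rank_slice_Suc])
  then have f_L: "bij_betw f ?L {0, 1, 2}"
    using f by (auto intro: bij_betw_subset)
  have "?U = (?L \<union> ?U) - ?L" by (auto simp: rank_level_def)
  moreover have "f ` ((?L \<union> ?U) - ?L) = f ` (?L \<union> ?U) - f ` ?L"
    by (rule inj_on_image_set_diff[OF bij_betw_imp_inj_on[OF f]]) auto
  ultimately have "f ` ?U = crown6 - {0, 1, 2}"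
    using bij_betw_imp_surj_on[OF f] \<open>f ` ?L = {0, 1, 2}\<close> by simp
  then have "bij_betw f ?U {3, 4, 5}"
    using f by (auto simp: crown6_eq intro: bij_betw_subset)
  with f_L f_le show ?thesis using that by blast
qed

lemma crown_slice_level_card:
  assumes "finite_poset P le" "poset_iso (rank_slice P le i (Suc i)) le crown6 crown6_le"
  shows "card (rank_level P le i) = 3" "card (rank_level P le (Suc i)) = 3"
proof -
  obtain f :: "'a \<Rightarrow> nat" where "bij_betw f (rank_level P le i) {0, 1, 2}"
    "bij_betw f (rank_level P le (Suc i)) {3, 4, 5}"
    using crown_slice_isoE[OF assms] by metis
  then show "card (rank_level P le i) = 3" "card (rank_level P le (Suc i)) = 3"
    by (simp_all add: bij_betw_same_card)
qed

lemma crown_slice_level_below_bij: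
  assumes "finite_poset P le" "poset_iso (rank_slice P le i (Suc i)) le crown6 crown6_le"
  shows "bij_betw (level_below P le i) (rank_level P le (Suc i))
    {S. S \<subseteq> rank_level P le i \<and> card S = 2}"
proof -
  let ?L = "rank_level P le i" and ?U = "rank_level P le (Suc i)"
  obtain f where f_L: "bij_betw f ?L {0, 1, 2}" and f_U: "bij_betw f ?U {3, 4, 5}"
    and f_le: "\<forall>x\<in>?L \<union> ?U. \<forall>y\<in>?L \<union> ?U. le x y \<longleftrightarrow> crown6_le (f x) (f y)"
    using crown_slice_isoE[OF assms] .
  let ?g = "inv_into ?L f"
  have g: "bij_betw ?g {0, 1, 2} ?L" using bij_betw_inv_into[OF f_L] .
  have "level_below P le i y = ?g ` crown6_below (f y)" if "y \<in> ?U" for y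
  proof (intro equalityI subsetI)
    fix x assume "x \<in> level_below P le i y"
    then have "x \<in> ?L" "crown6_le (f x) (f y)"
      using f_le \<open>y \<in> ?U\<close> by (auto simp: level_below_def)
    then show "x \<in> ?g ` crown6_below (f y)"
      using bij_betw_inv_into_left[OF f_L] bij_betwE[OF f_L]
      by (force simp: crown6_below_def)
  next
    fix x assume "x \<in> ?g ` crown6_below (f y)"
    then obtain z where "z \<in> {0, 1, 2}" "crown6_le z (f y)" "x = ?g z"
      by (auto simp: crown6_below_def)
    moreover have "x \<in> ?L" "f x = z"
      using calculation bij_betwE[OF g] bij_betw_inv_into_right[OF f_L] by auto
    ultimately show "x \<in> level_below P le i y"
      using f_le \<open>y \<in> ?U\<close> by (auto simp: level_below_def)
  qed
  then have "bij_betw (level_below P le i) ?U {S. S \<subseteq> ?L \<and> card S = 2}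
      \<longleftrightarrow> bij_betw (image ?g \<circ> (crown6_below \<circ> f)) ?U {S. S \<subseteq> ?L \<and> card S = 2}"
    by (intro bij_betw_cong) simp
  also have "\<dots>"
    using bij_betw_trans[OF bij_betw_trans[OF f_U crown6_below_bij] bij_betw_image_card_subsets[OF g]] .
  finally show ?thesis .
qed

lemma six_stack_elem_rank_le:
  assumes "six_stack P le n" "p \<in> P"
  shows "elem_rank P le p \<le> n"
  using assms by (simp add: six_stack_def elem_rank_le_rank)

lemma six_stack_level_below_bij:
  assumes "six_stack P le n" "i < n"
  shows "bij_betw (level_below P le i) (rank_level P le (Suc i))
     {S. S \<subseteq> rank_level P le i \<and> card S = 2}"
  using assms by (simp add: six_stack_def crown_slice_level_below_bij)

lemma six_stack_level_card:
  assumes "six_stack P le n" "i \<le> n"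
  shows "card (rank_level P le i) = 3"
proof (cases "i < n")
  case True
  then show ?thesis using assms by (simp add: six_stack_def crown_slice_level_card(1))
next
  case False
  with assms have "i = Suc (n - 1)" "n - 1 < n" by (auto simp: six_stack_def)
  then show ?thesis using assms by (metis six_stack_def crown_slice_level_card(2))
qed

(* The two lower covers of b lie above distinct 2-subsets of the 3-element level of a,
   and these cover that level. *)
lemma six_stack_le_of_rank_add_2:
  assumes st: "six_stack P le n" and "a \<in> P" "b \<in> P"
    and rank_b: "elem_rank P le b = elem_rank P le a + 2"
  shows "le a b"
proof -
  define i where "i = elem_rank P le a"
  have "Suc i < n"
    using six_stack_elem_rank_le[OF st \<open>b \<in> P\<close>] rank_b by (simp add: i_def)
  note below_bij = six_stack_level_below_bij[OF st, of i]
  have b: "b \<in> rank_level P le (Suc (Suc i))"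
    using \<open>b \<in> P\<close> rank_b by (simp add: rank_level_def i_def)
  obtain y1 y2 where "y1 \<noteq> y2" and "level_below P le (Suc i) b = {y1, y2}"
    using bij_betw_apply[OF six_stack_level_below_bij[OF st \<open>Suc i < n\<close>] b]
    by (auto simp: card_2_iff)
  then have y: "y1 \<in> rank_level P le (Suc i)" "y2 \<in> rank_level P le (Suc i)" "le y1 b" "le y2 b"
    unfolding level_below_def by blast+
  have "level_below P le i y1 \<union> level_below P le i y2 = rank_level P le i"
  proof (rule two_subsets_of_three_cover)
    show "card (rank_level P le i) = 3"
      using six_stack_level_card[OF st] \<open>Suc i < n\<close> by simp
    show "level_below P le i y1 \<noteq> level_below P le i y2"
      using bij_betw_imp_inj_on[OF below_bij] \<open>Suc i < n\<close> y(1,2) \<open>y1 \<noteq> y2\<close>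
      by (auto dest: inj_onD)
  qed (use bij_betwE[OF below_bij] \<open>Suc i < n\<close> y(1,2) in auto)
  moreover have "a \<in> rank_level P le i" using \<open>a \<in> P\<close> by (simp add: rank_level_def i_def)
  ultimately have "le a y1 \<or> le a y2" unfolding level_below_def by blast
  then show ?thesis
    using st \<open>a \<in> P\<close> \<open>b \<in> P\<close> y unfolding six_stack_def finite_poset_def rank_level_def by blast
qed

lemma six_stack_le_of_rank_gap:
  assumes st: "six_stack P le n" and "a \<in> P" "b \<in> P"
    and gap: "elem_rank P le a + 2 \<le> elem_rank P le b"
  shows "le a b"
proof -
  have fp: "finite_poset P le" using st by (simp add: six_stack_def)
  have "le a b" if "b \<in> P" "elem_rank P le b = elem_rank P le a + 2 + d" for b d
    using that
  proof (induction d arbitrary: b)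
    case 0
    then show ?case using six_stack_le_of_rank_add_2[OF st \<open>a \<in> P\<close>] by simp
  next
    case (Suc d)
    obtain c where "c \<in> P" "le c b" "elem_rank P le c = elem_rank P le a + 2 + d"
      using elem_rank_SucE[OF fp \<open>b \<in> P\<close>] Suc.prems(2) by (metis add_Suc_right)
    then show ?case
      using Suc.IH fp \<open>a \<in> P\<close> \<open>b \<in> P\<close> unfolding finite_poset_def by blast
  qed
  then show ?thesis using gap \<open>b \<in> P\<close> le_Suc_ex by blast
qed

lemma six_stack_isoI:
  assumes P: "six_stack P le n" and Q: "six_stack Q le' n" and g: "bij_betw g P Q"
    and rank_g: "\<And>p. p \<in> P \<Longrightarrow> elem_rank Q le' (g p) = elem_rank P le p"
    and cover_g: "\<And>x y. x \<in> P \<Longrightarrow> y \<in> P \<Longrightarrow> elem_rank P le y = Suc (elem_rank P le x) \<Longrightarrow>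
       le x y \<longleftrightarrow> le' (g x) (g y)"
  shows "poset_iso P le Q le'"
  unfolding poset_iso_def
proof (intro exI conjI ballI)
  fix x y assume "x \<in> P" "y \<in> P"
  then have "g x \<in> Q" "g y \<in> Q" using bij_betwE[OF g] by auto
  consider "elem_rank P le y \<le> elem_rank P le x"
    | "elem_rank P le y = Suc (elem_rank P le x)"
    | "elem_rank P le x + 2 \<le> elem_rank P le y"
    by linarith
  then show "le x y \<longleftrightarrow> le' (g x) (g y)"
  proof cases
    case 1
    then show ?thesis
      using le_iff_eq_if_elem_rank_le P Q \<open>x \<in> P\<close> \<open>y \<in> P\<close> \<open>g x \<in> Q\<close> \<open>g y \<in> Q\<close> rank_g
        bij_betw_imp_inj_on[OF g]
      unfolding six_stack_def inj_on_def by metis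
  next
    case 3
    then show ?thesis
      using six_stack_le_of_rank_gap P Q \<open>x \<in> P\<close> \<open>y \<in> P\<close> \<open>g x \<in> Q\<close> \<open>g y \<in> Q\<close> rank_g
      by metis
  qed (use cover_g \<open>x \<in> P\<close> \<open>y \<in> P\<close> in blast)
qed (rule g)

(* An element of rank i + 1 is determined by the 2-subset of rank-i elements below it, so a
   bijection between the rank-i levels of two 6-stacks transports to their rank-(i + 1) levels. *)
primrec level_map ::
  "'a set \<Rightarrow> ('a \<Rightarrow> 'a \<Rightarrow> bool) \<Rightarrow> 'b set \<Rightarrow> ('b \<Rightarrow> 'b \<Rightarrow> bool) \<Rightarrow> nat \<Rightarrow> 'a \<Rightarrow> 'b" where
  "level_map P le Q le' 0 = (SOME f. bij_betw f (rank_level P le 0) (rank_level Q le' 0))"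
| "level_map P le Q le' (Suc i) =
     inv_into (rank_level Q le' (Suc i)) (level_below Q le' i)
       \<circ> (image (level_map P le Q le' i) \<circ> level_below P le i)"

lemma level_map_bij:
  assumes P: "six_stack P le n" and Q: "six_stack Q le' n" and "i \<le> n"
  shows "bij_betw (level_map P le Q le' i) (rank_level P le i) (rank_level Q le' i)"
  using \<open>i \<le> n\<close>
proof (induction i)
  case 0
  have "card (rank_level P le 0) = 3" "card (rank_level Q le' 0) = 3"
    using six_stack_level_card[OF P] six_stack_level_card[OF Q] by simp_all
  then have "\<exists>f. bij_betw f (rank_level P le 0) (rank_level Q le' 0)"
    by (intro finite_same_card_bij) (simp_all add: card_ge_0_finite)
  then show ?case unfolding level_map.simps by (rule someI_ex)
next
  case (Suc i)
  then have "i < n" by simp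
  have "bij_betw (image (level_map P le Q le' i))
      {S. S \<subseteq> rank_level P le i \<and> card S = 2} {S. S \<subseteq> rank_level Q le' i \<and> card S = 2}"
    using bij_betw_image_card_subsets Suc.IH \<open>i < n\<close> by simp
  with six_stack_level_below_bij[OF P \<open>i < n\<close>]
    bij_betw_inv_into[OF six_stack_level_below_bij[OF Q \<open>i < n\<close>]]
  show ?case
    unfolding level_map.simps by (blast intro: bij_betw_trans)
qed

lemma level_below_level_map_Suc:
  assumes P: "six_stack P le n" and Q: "six_stack Q le' n" and "i < n"
    and "y \<in> rank_level P le (Suc i)"
  shows "level_below Q le' i (level_map P le Q le' (Suc i) y)
    = level_map P le Q le' i ` level_below P le i y"
proof -
  have "level_map P le Q le' i ` level_below P le i y
      \<in> {S. S \<subseteq> rank_level Q le' i \<and> card S = 2}"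
    using bij_betw_apply[OF bij_betw_image_card_subsets[OF level_map_bij[OF P Q]]]
      bij_betw_apply[OF six_stack_level_below_bij[OF P \<open>i < n\<close>] \<open>y \<in> _\<close>] \<open>i < n\<close>
    by simp
  then have "level_map P le Q le' i ` level_below P le i y
      \<in> level_below Q le' i ` rank_level Q le' (Suc i)"
    using bij_betw_imp_surj_on[OF six_stack_level_below_bij[OF Q \<open>i < n\<close>]] by simp
  then show ?thesis by (simp add: f_inv_into_f)
qed

definition stack_map :: "'a set \<Rightarrow> ('a \<Rightarrow> 'a \<Rightarrow> bool) \<Rightarrow> 'b set \<Rightarrow> ('b \<Rightarrow> 'b \<Rightarrow> bool) \<Rightarrow> 'a \<Rightarrow> 'b" where
  "stack_map P le Q le' p = level_map P le Q le' (elem_rank P le p) p"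

lemma stack_map_in_rank_level:
  assumes P: "six_stack P le n" and Q: "six_stack Q le' n" and "p \<in> P"
  shows "stack_map P le Q le' p \<in> rank_level Q le' (elem_rank P le p)"
  using bij_betw_apply[OF level_map_bij[OF P Q six_stack_elem_rank_le[OF P \<open>p \<in> P\<close>]]] \<open>p \<in> P\<close>
  by (simp add: stack_map_def rank_level_def)

lemma stack_map_bij:
  assumes P: "six_stack P le n" and Q: "six_stack Q le' n"
  shows "bij_betw (stack_map P le Q le') P Q"
  unfolding bij_betw_def
proof (intro conjI inj_onI equalityI subsetI)
  fix x y assume "x \<in> P" "y \<in> P" and eq: "stack_map P le Q le' x = stack_map P le Q le' y"
  then have "elem_rank P le x = elem_rank P le y"
    using stack_map_in_rank_level[OF P Q] by (metis (mono_tags, lifting) mem_Collect_eq rank_level_def)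
  then show "x = y"
    using eq inj_onD[OF bij_betw_imp_inj_on[OF level_map_bij[OF P Q]]]
      six_stack_elem_rank_le[OF P] \<open>x \<in> P\<close> \<open>y \<in> P\<close>
    by (simp add: stack_map_def rank_level_def)
next
  fix q assume "q \<in> stack_map P le Q le' ` P"
  then show "q \<in> Q" using stack_map_in_rank_level[OF P Q] by (auto simp: rank_level_def)
next
  fix q assume "q \<in> Q"
  define k where "k = elem_rank Q le' q"
  then have "q \<in> level_map P le Q le' k ` rank_level P le k"
    using bij_betw_imp_surj_on[OF level_map_bij[OF P Q six_stack_elem_rank_le[OF Q \<open>q \<in> Q\<close>]]]
      \<open>q \<in> Q\<close> by (simp add: rank_level_def)
  then show "q \<in> stack_map P le Q le' ` P"
    by (auto simp: stack_map_def rank_level_def)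
qed

theorem six_stack_unique:
  assumes P: "six_stack P le n" and Q: "six_stack Q le' n"
  shows "poset_iso P le Q le'"
proof (rule six_stack_isoI[OF P Q stack_map_bij[OF P Q]])
  fix p assume "p \<in> P"
  then show "elem_rank Q le' (stack_map P le Q le' p) = elem_rank P le p"
    using stack_map_in_rank_level[OF P Q] by (simp add: rank_level_def)
next
  fix x y assume "x \<in> P" "y \<in> P" and rank_y: "elem_rank P le y = Suc (elem_rank P le x)"
  define k where "k = elem_rank P le x"
  let ?f = "level_map P le Q le' k"
  have "k < n" using six_stack_elem_rank_le[OF P \<open>y \<in> P\<close>] rank_y by (simp add: k_def)
  have x: "x \<in> rank_level P le k" and y: "y \<in> rank_level P le (Suc k)"
    using \<open>x \<in> P\<close> \<open>y \<in> P\<close> rank_y by (simp_all add: rank_level_def k_def)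
  have f_inj: "inj_on ?f (rank_level P le k)"
    using bij_betw_imp_inj_on[OF level_map_bij[OF P Q]] \<open>k < n\<close> by simp
  have "le x y \<longleftrightarrow> x \<in> level_below P le k y"
    using x by (simp add: level_below_def)
  also have "\<dots> \<longleftrightarrow> ?f x \<in> ?f ` level_below P le k y"
    using inj_on_image_mem_iff[OF f_inj x] by (simp add: level_below_def)
  also have "\<dots> \<longleftrightarrow> ?f x \<in> level_below Q le' k (stack_map P le Q le' y)"
    using level_below_level_map_Suc[OF P Q \<open>k < n\<close> y] rank_y by (simp add: stack_map_def k_def)
  also have "\<dots> \<longleftrightarrow> le' (stack_map P le Q le' x) (stack_map P le Q le' y)"
    using stack_map_in_rank_level[OF P Q \<open>x \<in> P\<close>] by (simp add: level_below_def stack_map_def k_def)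
  finally show "le x y \<longleftrightarrow> le' (stack_map P le Q le' x) (stack_map P le Q le' y)" .
qed

(* The number 3 k + r with r < 3 is the r-th element of rank k.  Between consecutive ranks,
   r lies below r and below r - 1 (mod 3), exactly as x_r lies below y_r and y_(r-1) in the
   crown. *)
definition stack_cover :: "nat \<Rightarrow> nat \<Rightarrow> bool" where
  "stack_cover r s \<longleftrightarrow> s = r \<or> s = (r + 2) mod 3"

definition stack_le :: "nat \<Rightarrow> nat \<Rightarrow> bool" where
  "stack_le a b \<longleftrightarrow> a = b \<or> a div 3 + 2 \<le> b div 3
     \<or> (b div 3 = Suc (a div 3) \<and> stack_cover (a mod 3) (b mod 3))"

definition stack_carrier :: "nat \<Rightarrow> nat set" where
  "stack_carrier n = {..<3 * Suc n}"

lemma stack_cover_between: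
  assumes "r < 3" "s < 3"
  shows "\<exists>t<3. stack_cover r t \<and> stack_cover t s"
proof -
  have "r \<in> {0, 1, 2}" "s \<in> {0, 1, 2}" using assms by auto
  then show ?thesis
    unfolding stack_cover_def numeral_3_eq_3 Ex_less_Suc by auto
qed

lemma stack_le_div_less: "stack_le a b \<Longrightarrow> a \<noteq> b \<Longrightarrow> a div 3 < b div 3"
  unfolding stack_le_def by auto

lemma finite_poset_stack: "finite_poset (stack_carrier n) stack_le"
  unfolding finite_poset_def
proof (intro conjI ballI impI)
  fix x y z assume "stack_le x y \<and> stack_le y z"
  then show "stack_le x z"
    using stack_le_div_less[of x y] stack_le_div_less[of y z] unfolding stack_le_def by fastforce
qed (auto simp: stack_carrier_def stack_le_def dest: stack_le_div_less)

lemma elem_rank_stack: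
  assumes "a \<in> stack_carrier n"
  shows "elem_rank (stack_carrier n) stack_le a = a div 3"
proof (rule elem_rank_eqI[OF finite_poset_stack assms])
  fix y m assume "y \<in> stack_carrier n" "y div 3 = Suc m"
  then show "\<exists>x\<in>stack_carrier n. stack_le x y \<and> x \<noteq> y \<and> x div 3 = m"
    by (intro bexI[of _ "3 * m + y mod 3"]) (auto simp: stack_le_def stack_cover_def stack_carrier_def)
qed (rule stack_le_div_less)

lemma stack_chain_inj_on_div:
  assumes "is_chain (stack_carrier n) stack_le C"
  shows "inj_on (\<lambda>x. x div 3) C"
  using assms stack_le_div_less unfolding is_chain_def by (fastforce intro: inj_onI)

(* C has at most one element at each of the levels k - 1 and k + 1, and stack_cover_between
   provides an element of level k comparable with both. *)
lemma stack_chain_fill_level: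
  assumes chain: "is_chain (stack_carrier n) stack_le C" and "k \<le> n"
    and missing: "\<forall>x\<in>C. x div 3 \<noteq> k"
  obtains c where "c div 3 = k" "is_chain (stack_carrier n) stack_le (insert c C)"
proof -
  have residue: "\<exists>r<3. \<forall>x\<in>C. x div 3 = j \<longrightarrow> x mod 3 = r" for j
  proof (cases "\<exists>x\<in>C. x div 3 = j")
    case True
    then obtain x where x: "x \<in> C" "x div 3 = j" by blast
    have "y = x" if "y \<in> C" "y div 3 = j" for y
      using inj_onD[OF stack_chain_inj_on_div[OF chain], of y x] that x by simp
    then show ?thesis by (intro exI[of _ "x mod 3"]) auto
  qed (intro exI[of _ 0], auto)
  obtain r where "r < 3" and r: "\<forall>x\<in>C. x div 3 = k - 1 \<longrightarrow> x mod 3 = r"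
    using residue by blast
  obtain s where "s < 3" and s: "\<forall>x\<in>C. x div 3 = k + 1 \<longrightarrow> x mod 3 = s"
    using residue by blast
  obtain t where "t < 3" "stack_cover r t" "stack_cover t s"
    using stack_cover_between[OF \<open>r < 3\<close> \<open>s < 3\<close>] by blast
  define c where "c = 3 * k + t"
  have c: "c div 3 = k" "c mod 3 = t" using \<open>t < 3\<close> by (simp_all add: c_def)
  have c_cmp: "stack_le x c \<or> stack_le c x" if "x \<in> C" for x
  proof -
    have "x div 3 \<noteq> k" using missing that by blast
    then consider "x div 3 + 2 \<le> k" | "x div 3 + 1 = k" | "x div 3 = k + 1" | "k + 2 \<le> x div 3"
      by linarith
    then show ?thesis
    proof cases
      case 2
      then have "x mod 3 = r" using r that by simp
      then show ?thesis using 2 c \<open>stack_cover r t\<close> by (simp add: stack_le_def)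
    next
      case 3
      then have "x mod 3 = s" using s that by simp
      then show ?thesis using 3 c \<open>stack_cover t s\<close> by (simp add: stack_le_def)
    qed (use c in \<open>simp_all add: stack_le_def\<close>)
  qed
  have "c \<in> stack_carrier n"
    using \<open>k \<le> n\<close> \<open>t < 3\<close> by (simp add: stack_carrier_def c_def)
  then have "is_chain (stack_carrier n) stack_le (insert c C)"
    using chain c_cmp unfolding is_chain_def by (auto simp: stack_le_def)
  with c(1) show ?thesis using that by blast
qed

lemma maximal_chain_stack_card:
  assumes max: "maximal_chain (stack_carrier n) stack_le C"
  shows "card C = Suc n"
proof -
  have chain: "is_chain (stack_carrier n) stack_le C"
    using max by (simp add: maximal_chain_def)
  have "k \<in> (\<lambda>x. x div 3) ` C" if "k \<le> n" for k
  proof (rule ccontr)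
    assume "k \<notin> (\<lambda>x. x div 3) ` C"
    then obtain c where "c div 3 = k" "is_chain (stack_carrier n) stack_le (insert c C)"
      using stack_chain_fill_level[OF chain \<open>k \<le> n\<close>] by blast
    moreover from this have "c \<in> C" using max unfolding maximal_chain_def by blast
    ultimately show False using \<open>k \<notin> (\<lambda>x. x div 3) ` C\<close> by blast
  qed
  moreover have "(\<lambda>x. x div 3) ` C \<subseteq> {..n}"
    using chain by (auto simp: is_chain_def stack_carrier_def)
  ultimately have "bij_betw (\<lambda>x. x div 3) C {..n}"
    using stack_chain_inj_on_div[OF chain] unfolding bij_betw_def by blast
  then show ?thesis by (simp add: bij_betw_same_card)
qed

lemma rank_slice_stack:
  assumes "i < n"
  shows "rank_slice (stack_carrier n) stack_le i (Suc i) = {3 * i..<3 * i + 6}"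
  using assms elem_rank_stack by (auto simp: rank_slice_def stack_carrier_def)

lemma stack_le_shift_crown6:
  assumes "u < 6" "v < 6"
  shows "stack_le (3 * i + u) (3 * i + v) \<longleftrightarrow> crown6_le u v"
proof -
  have "stack_le (3 * i + u) (3 * i + v) \<longleftrightarrow> stack_le u v"
    by (simp add: stack_le_def)
  also have "\<dots> \<longleftrightarrow> crown6_le u v"
  proof -
    have "u \<in> {0, 1, 2, 3, 4, 5}" "v \<in> {0, 1, 2, 3, 4, 5}" using assms by auto
    then show ?thesis
      unfolding insert_iff empty_iff by (elim disjE) (simp_all add: stack_le_def stack_cover_def crown6_le_def)
  qed
  finally show ?thesis .
qed

lemma rank_slice_stack_iso_crown6:
  assumes "i < n"
  shows "poset_iso (rank_slice (stack_carrier n) stack_le i (Suc i)) stack_le crown6 crown6_le"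
  unfolding poset_iso_def rank_slice_stack[OF assms] crown6_def
proof (intro exI conjI ballI)
  show "bij_betw (\<lambda>p. p - 3 * i) {3 * i..<3 * i + 6} {0..5}"
    by (rule bij_betw_byWitness[of _ "\<lambda>u. 3 * i + u"]) auto
  fix x y assume "x \<in> {3 * i..<3 * i + 6}" "y \<in> {3 * i..<3 * i + 6}"
  then show "stack_le x y \<longleftrightarrow> crown6_le (x - 3 * i) (y - 3 * i)"
    using stack_le_shift_crown6[of "x - 3 * i" "y - 3 * i" i] by auto
qed

lemma six_stack_exists: "1 \<le> n \<Longrightarrow> six_stack (stack_carrier n) stack_le n"
  unfolding six_stack_def ranked_of_rank_def
  using finite_poset_stack maximal_chain_stack_card rank_slice_stack_iso_crown6 by blast

theorem proposition4p1:
  fixes n :: nat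
  assumes "n \<ge> 1"
  shows "(\<exists>(P :: nat set) le. six_stack P le n)
    \<and> (\<forall>(P :: 'a set) leP (Q :: 'b set) leQ.
          six_stack P leP n \<and> six_stack Q leQ n \<longrightarrow> poset_iso P leP Q leQ)"
proof (intro conjI allI impI)
  show "\<exists>(P :: nat set) le. six_stack P le n"
    using six_stack_exists[OF assms] by blast
  fix P :: "'a set" and leP and Q :: "'b set" and leQ
  assume "six_stack P leP n \<and> six_stack Q leQ n"
  then show "poset_iso P leP Q leQ"
    using six_stack_unique by blast
qed

end
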